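(* For $n\geq 1$, $$P^{(\mathsf{cros}, \mathsf{exc}, \mathsf{fix})}(\mathfrak{S}_n(321); q, tq, r)=\left(\frac{1+xt}{1+x}\right)^{n}P^{(\mathsf{cros}, \mathsf{cpk}, \mathsf{exc}, \mathsf{fix})}\left(\mathfrak{S}_n(321); q, \frac{(1+x)^{2}t}{(x+t)(1+xt)},\frac{q(x+t)}{1+xt}, \frac{(1+x)r}{1+xt}\right),$$ equivalently, $$P^{(\mathsf{cros}, \mathsf{cpk}, \mathsf{exc}, \mathsf{fix})}(\mathfrak{S}_n(321); q, x, qt, r)=\left(\frac{1+u}{1+uv}\right)^{n}P^{(\mathsf{cros}, \mathsf{exc}, \mathsf{fix})}\left(\mathfrak{S}_n(321); q, qv, \frac{(1+uv)r}{1+u}\right),$$ where $u=\frac{1+t^{2}-2xt-(1-t)\sqrt{(1+t)^{2}-4xt}}{2(1-x)t}$ and $v=\frac{(1+t)^{2}-2xt-(1+t)\sqrt{(1+t)^{2}-4xt}}{2xt}$.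
   Context: $\mathfrak{S}_n(321)$ is the set of permutations of $[n]$ avoiding the pattern $321$. $P^{(\mathsf{stat}_1,\ldots,\mathsf{stat}_m)}(\Omega;t_1,\ldots,t_m)=\sum_{\sigma\in\Omega}\prod_jt_j^{\mathsf{stat}_j\sigma}$. $\mathsf{exc}\,\sigma=\#\{i:\sigma(i)>i\}$, $\mathsf{fix}\,\sigma=\#\{i:\sigma(i)=i\}$, $\mathsf{cpk}\,\sigma=\#\{x:\sigma^{-1}(x)<x>\sigma(x)\}$, $\mathsf{cros}\,\sigma=\sum_{i}\#\{j:j<i<\sigma(j)<\sigma(i)\text{ or }\sigma(i)<\sigma(j)\le i<j\}$. *)

theory Defs
  imports Complex_Main "HOL-Combinatorics.Permutations"
begin

definition av321 :: "nat \<Rightarrow> (nat \<Rightarrow> nat) set" where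
  "av321 n = {\<sigma>. \<sigma> permutes {1..n} \<and>
     \<not> (\<exists>i\<in>{1..n}. \<exists>j\<in>{1..n}. \<exists>k\<in>{1..n}.
           i < j \<and> j < k \<and> \<sigma> i > \<sigma> j \<and> \<sigma> j > \<sigma> k)}"

definition exc :: "nat \<Rightarrow> (nat \<Rightarrow> nat) \<Rightarrow> nat" where
  "exc n \<sigma> = card {i\<in>{1..n}. \<sigma> i > i}"

definition fixp :: "nat \<Rightarrow> (nat \<Rightarrow> nat) \<Rightarrow> nat" where
  "fixp n \<sigma> = card {i\<in>{1..n}. \<sigma> i = i}"

definition cpk :: "nat \<Rightarrow> (nat \<Rightarrow> nat) \<Rightarrow> nat" where
  "cpk n \<sigma> = card {x\<in>{1..n}. inv \<sigma> x < x \<and> x > \<sigma> x}"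

definition cros :: "nat \<Rightarrow> (nat \<Rightarrow> nat) \<Rightarrow> nat" where
  "cros n \<sigma> = (\<Sum>i\<in>{1..n}. card {j\<in>{1..n}.
       (j < i \<and> i < \<sigma> j \<and> \<sigma> j < \<sigma> i) \<or> (\<sigma> i < \<sigma> j \<and> \<sigma> j \<le> i \<and> i < j)})"

end

theory Submission
  imports Defs "HOL-Library.Infinite_Set"
begin

text \<open>A 321-avoiding permutation \<open>\<sigma>\<close> is the union of two increasing subsequences, its
  excedances and its weak non-excedances. So \<open>\<sigma>\<close> is determined by the set \<open>E\<close> of excedance
  positions and the set \<open>V\<close> of excedance values, and the pairs \<open>(E, V)\<close> that occur are exactly
  the ballot pairs. In these terms \<open>exc = |E|\<close>, \<open>cpk = |V - E|\<close>, the fixed points are the ground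
  points, and \<open>cros + exc = \<Sum>V - \<Sum>E\<close>: the arcs \<open>j \<mapsto> \<sigma> j\<close> with \<open>j < b \<le> \<sigma> j\<close> are the
  arcs crossing at \<open>b\<close> together with the arc ending at \<open>b\<close> if \<open>b \<in> V\<close>, and summing their number
  over \<open>b\<close> gives \<open>\<Sum>(\<sigma> j - j)\<close> over the excedances.

  Put \<open>U = E - V\<close>, \<open>D = V - E\<close> and \<open>S = E \<inter> V\<close>. Given \<open>(U, D)\<close>, the set \<open>S\<close> ranges over all
  subsets of the raised points, and only \<open>exc\<close> depends on \<open>S\<close>. Summing over \<open>S\<close> leaves a sum
  over \<open>(U, D)\<close> of \<open>q^(\<Sum>D - \<Sum>U) u^|U| g^#ground h^#raised\<close>, with \<open>(u, g, h) = (t, r, 1 + t)\<close>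
  on the left and \<open>(\<alpha>\<beta>, \<gamma>, 1 + \<beta>)\<close> on the right, where \<open>\<alpha>, \<beta>, \<gamma>\<close> are the values substituted
  for the variables of \<open>cpk, exc, fix\<close> (up to the factor \<open>q\<close> of \<open>exc\<close>). As
  \<open>n = 2|U| + #ground + #raised\<close>, multiplying by \<open>c^n\<close> replaces \<open>(u, g, h)\<close> by \<open>(c^2 u, c g, c h)\<close>,
  and for \<open>c = (1 + x t) / (1 + x)\<close> one has \<open>c^2 \<alpha> \<beta> = t\<close>, \<open>c \<gamma> = r\<close> and \<open>c (1 + \<beta>) = 1 + t\<close>.\<close>

section \<open>Permutations of {1..n}\<close>

definition excedances :: "nat \<Rightarrow> (nat \<Rightarrow> nat) \<Rightarrow> nat set" where
  "excedances n s = {i\<in>{1..n}. s i > i}"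

lemma permutes_card_cut_up_eq_down:
  fixes s :: "nat \<Rightarrow> nat"
  assumes s: "s permutes {1..n}" and p: "p \<le> n"
  shows "card {j\<in>{1..n}. j \<le> p \<and> p < s j} = card {k\<in>{1..n}. p < k \<and> s k \<le> p}"
proof -
  let ?X = "{j\<in>{1..n}. j \<le> p \<and> s j \<le> p}"
  let ?Y = "{j\<in>{1..n}. j \<le> p \<and> p < s j}"
  let ?Z = "{k\<in>{1..n}. p < k \<and> s k \<le> p}"
  have "?X \<union> ?Y = {1..p}" using p by auto
  then have XY: "card ?X + card ?Y = p"
    using card_Un_disjoint[of ?X ?Y] by (simp add: disjoint_iff)
  have "s ` {k\<in>{1..n}. s k \<le> p} = {y\<in>s ` {1..n}. y \<le> p}" by auto
  also have "\<dots> = {1..p}" using permutes_image[OF s] p by auto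
  finally have "card {k\<in>{1..n}. s k \<le> p} = p"
    using card_image[OF permutes_inj_on[OF s]] by (metis card_atLeastAtMost diff_Suc_1)
  moreover have "?X \<union> ?Z = {k\<in>{1..n}. s k \<le> p}" by auto
  ultimately have XZ: "card ?X + card ?Z = p"
    using card_Un_disjoint[of ?X ?Z] by (simp add: disjoint_iff)
  from XY XZ show ?thesis by simp
qed

lemma permutes_ex_cut_up_iff_down:
  fixes s :: "nat \<Rightarrow> nat"
  assumes "s permutes {1..n}" and "p \<le> n"
  shows "(\<exists>j\<in>{1..n}. j \<le> p \<and> p < s j) \<longleftrightarrow> (\<exists>k\<in>{1..n}. p < k \<and> s k \<le> p)"
proof -
  let ?Y = "{j\<in>{1..n}. j \<le> p \<and> p < s j}" and ?Z = "{k\<in>{1..n}. p < k \<and> s k \<le> p}"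
  have "?Y = {} \<longleftrightarrow> ?Z = {}"
    using permutes_card_cut_up_eq_down[OF assms] card_0_eq[of ?Y] card_0_eq[of ?Z] by simp
  then show ?thesis by blast
qed

lemma permutes_card_covering_anti_excedance:
  fixes s :: "nat \<Rightarrow> nat"
  assumes s: "s permutes {1..n}" and b: "b \<in> {1..n}" and sb: "s b < b"
  shows "card {j\<in>{1..n}. j < b \<and> b \<le> s j} = card {k\<in>{1..n}. b < k \<and> s k < b} + 1"
proof -
  have "b - 1 \<le> n" using b by auto
  have "card {j\<in>{1..n}. j < b \<and> b \<le> s j} = card {j\<in>{1..n}. j \<le> b - 1 \<and> b - 1 < s j}"
    using b by (intro arg_cong[where f=card]) auto
  also have "\<dots> = card {k\<in>{1..n}. b - 1 < k \<and> s k \<le> b - 1}"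
    using permutes_card_cut_up_eq_down[OF s \<open>b - 1 \<le> n\<close>] .
  also have "{k\<in>{1..n}. b - 1 < k \<and> s k \<le> b - 1} = insert b {k\<in>{1..n}. b < k \<and> s k < b}"
    using b sb by auto
  finally show ?thesis by simp
qed

lemma permutes_card_preimage_filter:
  fixes s :: "nat \<Rightarrow> nat"
  assumes s: "s permutes {1..n}" and b: "b \<in> {1..n}"
  shows "card {j\<in>{1..n}. s j = b \<and> P j} = (if P (inv s b) then 1 else 0)"
proof -
  have "inv s b \<in> {1..n}" using b permutes_in_image[OF permutes_inv[OF s]] by auto
  moreover have "s j = b \<longleftrightarrow> j = inv s b" for j
    using permutes_inverses[OF s] by metis
  ultimately have "{j\<in>{1..n}. s j = b \<and> P j} = (if P (inv s b) then {inv s b} else {})" by auto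
  then show ?thesis by simp
qed

lemma permutes_image_excedances:
  fixes s :: "nat \<Rightarrow> nat"
  assumes s: "s permutes {1..n}"
  shows "s ` excedances n s = {b\<in>{1..n}. inv s b < b}"
proof -
  have "s ` excedances n s = {b\<in>s ` {1..n}. inv s b < b}"
    using permutes_inverses(2)[OF s] unfolding excedances_def by force
  then show ?thesis using permutes_image[OF s] by simp
qed

lemma card_filter_eq_sum_indicator:
  "finite A \<Longrightarrow> card {x\<in>A. P x} = (\<Sum>x\<in>A. if P x then 1 else 0)"
  by (simp add: sum.inter_filter[symmetric])

lemma permutes_sum_card_covering:
  fixes s :: "nat \<Rightarrow> nat"
  assumes s: "s permutes {1..n}"
  shows "(\<Sum>b\<in>{1..n}. card {j\<in>{1..n}. j < b \<and> b \<le> s j}) = (\<Sum>j\<in>excedances n s. s j - j)"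
proof -
  have "(\<Sum>b\<in>{1..n}. card {j\<in>{1..n}. j < b \<and> b \<le> s j})
      = (\<Sum>b\<in>{1..n}. \<Sum>j\<in>{1..n}. if j < b \<and> b \<le> s j then 1 else 0)"
    by (intro sum.cong refl card_filter_eq_sum_indicator) simp
  also have "\<dots> = (\<Sum>j\<in>{1..n}. \<Sum>b\<in>{1..n}. if j < b \<and> b \<le> s j then 1 else 0)"
    by (rule sum.swap)
  also have "\<dots> = (\<Sum>j\<in>{1..n}. if j < s j then s j - j else 0)"
  proof (rule sum.cong[OF refl])
    fix j assume j: "j \<in> {1..n}"
    have "{b\<in>{1..n}. j < b \<and> b \<le> s j} = {j<..s j}"
      using j permutes_in_image[OF s, of j] by auto
    then show "(\<Sum>b\<in>{1..n}. if j < b \<and> b \<le> s j then 1 else 0) = (if j < s j then s j - j else 0)"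
      using card_filter_eq_sum_indicator[of "{1..n}" "\<lambda>b. j < b \<and> b \<le> s j"] by simp
  qed
  also have "\<dots> = (\<Sum>j\<in>excedances n s. s j - j)"
    unfolding excedances_def by (rule sum.inter_filter[OF finite_atLeastAtMost, symmetric])
  finally show ?thesis .
qed

section \<open>Structure of 321-avoiding permutations\<close>

lemma av321_permutes: "s \<in> av321 n \<Longrightarrow> s permutes {1..n}"
  by (simp add: av321_def)

lemma av321_no_321:
  assumes "s \<in> av321 n" "i \<in> {1..n}" "j \<in> {1..n}" "k \<in> {1..n}" "i < j" "j < k" "s j < s i" "s k < s j"
  shows False
  using assms unfolding av321_def by blast

lemma av321_strict_mono_on_excedances:
  assumes av: "s \<in> av321 n"
  shows "strict_mono_on (excedances n s) s"
proof (rule strict_mono_onI)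
  fix i j assume ij: "i \<in> excedances n s" "j \<in> excedances n s" "i < j"
  have s: "s permutes {1..n}" using av321_permutes[OF av] .
  show "s i < s j"
  proof (rule ccontr)
    assume "\<not> s i < s j"
    moreover have "s i \<noteq> s j" using permutes_inj[OF s] ij(3) by (auto dest: injD)
    ultimately have lt: "s j < s i" by simp
    obtain k where k: "k \<in> {1..n}" "j < k" "s k \<le> j"
      using permutes_ex_cut_up_iff_down[OF s, of j] ij unfolding excedances_def by auto
    show False
      using av321_no_321[OF av _ _ k(1) ij(3) k(2) lt] k ij unfolding excedances_def by auto
  qed
qed

lemma av321_strict_mono_on_non_excedances:
  assumes av: "s \<in> av321 n"
  shows "strict_mono_on ({1..n} - excedances n s) s"
proof (rule strict_mono_onI)
  fix i j assume ij: "i \<in> {1..n} - excedances n s" "j \<in> {1..n} - excedances n s" "i < j"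
  have s: "s permutes {1..n}" using av321_permutes[OF av] .
  show "s i < s j"
  proof (rule ccontr)
    assume "\<not> s i < s j"
    moreover have "s i \<noteq> s j" using permutes_inj[OF s] ij(3) by (auto dest: injD)
    ultimately have lt: "s j < s i" by simp
    obtain h where h: "h \<in> {1..n}" "h \<le> i" "i < s h"
      using permutes_ex_cut_up_iff_down[OF s, of i] ij lt unfolding excedances_def by force
    have "h < i" using h ij unfolding excedances_def by (cases "h = i") auto
    show False
      using av321_no_321[OF av h(1) _ _ \<open>h < i\<close> ij(3)] h ij lt unfolding excedances_def by auto
  qed
qed

lemma av321_fixed_point_uncovered:
  assumes av: "s \<in> av321 n" and b: "b \<in> {1..n}" and sb: "s b = b"
  shows "{j\<in>{1..n}. j < b \<and> b \<le> s j} = {}"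
proof (rule ccontr)
  assume "{j\<in>{1..n}. j < b \<and> b \<le> s j} \<noteq> {}"
  then obtain j where j: "j \<in> {1..n}" "j < b" "b \<le> s j" by blast
  have s: "s permutes {1..n}" using av321_permutes[OF av] .
  have "s j \<noteq> s b" using j(2) by (simp add: inj_eq[OF permutes_inj[OF s]])
  then have "b < s j" using sb j(3) by simp
  then obtain k where k: "k \<in> {1..n}" "b < k" "s k \<le> b"
    using permutes_ex_cut_up_iff_down[OF s, of b] j b by auto
  have "s k \<noteq> s b" using k(2) by (simp add: inj_eq[OF permutes_inj[OF s]])
  then show False using av321_no_321[OF av j(1) b k(1) j(2) k(2)] sb \<open>b < s j\<close> k(3) by simp
qed

lemma av321_card_lower_crossings:
  assumes av: "s \<in> av321 n" and b: "b \<in> {1..n}" and sb: "s b < b"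
  shows "card {j\<in>{1..n}. s b < s j \<and> s j \<le> b \<and> b < j}
       = card {k\<in>{1..n}. b < k \<and> s k < b} + (if b < inv s b then 1 else 0)"
proof -
  have s: "s permutes {1..n}" using av321_permutes[OF av] .
  let ?R = "{k\<in>{1..n}. b < k \<and> s k < b}"
  have "s b < s k" if "k \<in> ?R" for k
    using strict_mono_onD[OF av321_strict_mono_on_non_excedances[OF av], of b k] that b sb
    by (simp add: excedances_def)
  then have "{j\<in>{1..n}. s b < s j \<and> s j \<le> b \<and> b < j} = ?R \<union> {j\<in>{1..n}. s j = b \<and> b < j}"
    using sb by auto
  then show ?thesis
    using permutes_card_preimage_filter[OF s b, of "\<lambda>j. b < j"]
    by (simp add: card_Un_disjoint disjoint_iff)
qed

lemma av321_card_covering: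
  assumes av: "s \<in> av321 n" and b: "b \<in> {1..n}"
  shows "card {j\<in>{1..n}. j < b \<and> b \<le> s j}
       = card {j\<in>{1..n}. (j < b \<and> b < s j \<and> s j < s b) \<or> (s b < s j \<and> s j \<le> b \<and> b < j)}
         + (if inv s b < b then 1 else 0)"
proof -
  have s: "s permutes {1..n}" using av321_permutes[OF av] .
  let ?up = "{j\<in>{1..n}. j < b \<and> b < s j \<and> s j < s b}"
  let ?low = "{j\<in>{1..n}. s b < s j \<and> s j \<le> b \<and> b < j}"
  have "{j\<in>{1..n}. (j < b \<and> b < s j \<and> s j < s b) \<or> (s b < s j \<and> s j \<le> b \<and> b < j)} = ?up \<union> ?low"
    by auto
  then have crossings: "card {j\<in>{1..n}. (j < b \<and> b < s j \<and> s j < s b) \<or> (s b < s j \<and> s j \<le> b \<and> b < j)}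
      = card ?up + card ?low"
    by (simp add: card_Un_disjoint disjoint_iff)
  consider "b < s b" | "s b = b" | "s b < b" by linarith
  then have "card {j\<in>{1..n}. j < b \<and> b \<le> s j} = card ?up + card ?low + (if inv s b < b then 1 else 0)"
  proof cases
    case 1
    have "s j < s b" if "j \<in> {1..n}" "j < b" "b < s j" for j
      using strict_mono_onD[OF av321_strict_mono_on_excedances[OF av], of j b] that b 1
      by (simp add: excedances_def)
    then have up: "?up = {j\<in>{1..n}. j < b \<and> b < s j}" by auto
    have "{j\<in>{1..n}. j < b \<and> b \<le> s j} = ?up \<union> {j\<in>{1..n}. s j = b \<and> j < b}"
      unfolding up by auto
    then have "card {j\<in>{1..n}. j < b \<and> b \<le> s j} = card ?up + card {j\<in>{1..n}. s j = b \<and> j < b}"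
      by (simp add: card_Un_disjoint disjoint_iff)
    moreover have "?low = {}" using 1 by auto
    ultimately show ?thesis using permutes_card_preimage_filter[OF s b, of "\<lambda>j. j < b"] by simp
  next
    case 2
    have "inv s b = b" using permutes_inv_eq[OF s, of b b] 2 by simp
    moreover have "?up = {}" and "?low = {}" using 2 by auto
    ultimately show ?thesis unfolding av321_fixed_point_uncovered[OF av b 2] by simp
  next
    case 3
    have "inv s b \<noteq> b" using permutes_inv_eq[OF s, of b b] 3 by simp
    moreover have "?up = {}" using 3 by auto
    ultimately show ?thesis
      using permutes_card_covering_anti_excedance[OF s b 3] av321_card_lower_crossings[OF av b 3]
      by auto
  qed
  with crossings show ?thesis by simp
qed

lemma av321_cros_plus_exc:
  assumes av: "s \<in> av321 n"
  shows "cros n s + exc n s = (\<Sum>v\<in>s ` excedances n s. v) - (\<Sum>e\<in>excedances n s. e)"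
proof -
  have s: "s permutes {1..n}" using av321_permutes[OF av] .
  have "exc n s = card (s ` excedances n s)"
    using card_image[OF permutes_inj_on[OF s]] unfolding exc_def excedances_def by simp
  also have "\<dots> = (\<Sum>b\<in>{1..n}. if inv s b < b then 1 else 0)"
    unfolding permutes_image_excedances[OF s] by (rule card_filter_eq_sum_indicator) simp
  finally have exc_sum: "exc n s = (\<Sum>b\<in>{1..n}. if inv s b < b then 1 else 0)" .
  have "cros n s + exc n s = (\<Sum>b\<in>{1..n}. card {j\<in>{1..n}. j < b \<and> b \<le> s j})"
    unfolding cros_def exc_sum sum.distrib[symmetric]
    by (rule sum.cong[OF refl], rule av321_card_covering[OF av, symmetric])
  also have "\<dots> = (\<Sum>j\<in>excedances n s. s j - j)"
    by (rule permutes_sum_card_covering[OF s])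
  also have "\<dots> = (\<Sum>j\<in>excedances n s. s j) - (\<Sum>j\<in>excedances n s. j)"
    by (rule sum_subtractf_nat) (auto simp: excedances_def)
  also have "(\<Sum>j\<in>excedances n s. s j) = (\<Sum>v\<in>s ` excedances n s. v)"
    by (simp add: sum.reindex permutes_inj_on[OF s])
  finally show ?thesis .
qed

section \<open>Ballot pairs\<close>

text \<open>Read \<open>a \<in> E\<close> as an up step and \<open>a \<in> V\<close> as a down step of a lattice path at time \<open>a\<close>
  (the up step first if both). Then \<open>ballot n E V\<close> says that the path returns to height 0 without
  ever going below it, and the ground and raised points are its remaining, horizontal, steps at
  height 0 and at positive height.\<close>

definition ballot :: "nat \<Rightarrow> nat set \<Rightarrow> nat set \<Rightarrow> bool" where
  "ballot n E V \<longleftrightarrow> E \<subseteq> {1..n} \<and> V \<subseteq> {1..n} \<and> card E = card V \<and>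
     (\<forall>a\<in>{1..n}. card (V \<inter> {..a}) \<le> card (E \<inter> {..<a}))"

definition ground_points :: "nat \<Rightarrow> nat set \<Rightarrow> nat set \<Rightarrow> nat set" where
  "ground_points n E V =
     {a\<in>{1..n}. a \<notin> E \<and> a \<notin> V \<and> card (E \<inter> {..<a}) = card (V \<inter> {..<a})}"

definition raised_points :: "nat \<Rightarrow> nat set \<Rightarrow> nat set \<Rightarrow> nat set" where
  "raised_points n E V =
     {a\<in>{1..n}. a \<notin> E \<and> a \<notin> V \<and> card (V \<inter> {..<a}) < card (E \<inter> {..<a})}"

lemma exc_eq_card_excedances: "exc n s = card (excedances n s)"
  by (simp add: exc_def excedances_def)

lemma cpk_eq_card_excedance_values_diff:
  fixes s :: "nat \<Rightarrow> nat"
  assumes s: "s permutes {1..n}"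
  shows "cpk n s = card (s ` excedances n s - excedances n s)"
proof -
  have "s x < x \<longleftrightarrow> \<not> x < s x" if "inv s x < x" for x
    using that permutes_inv_eq[OF s, of x x] by auto
  then have "{x\<in>{1..n}. inv s x < x \<and> s x < x} = s ` excedances n s - excedances n s"
    unfolding permutes_image_excedances[OF s] unfolding excedances_def by auto
  then show ?thesis unfolding cpk_def by simp
qed

lemma ballot_excedances:
  fixes s :: "nat \<Rightarrow> nat"
  assumes s: "s permutes {1..n}"
  shows "ballot n (excedances n s) (s ` excedances n s)"
proof -
  let ?E = "excedances n s" and ?V = "s ` excedances n s"
  have "card (?V \<inter> {..a}) \<le> card (?E \<inter> {..<a})" for a
  proof -
    have "inv s ` (?V \<inter> {..a}) \<subseteq> ?E \<inter> {..<a}"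
      using permutes_inverses(2)[OF s] unfolding excedances_def by auto
    then show ?thesis
      using card_inj_on_le[OF permutes_inj_on[OF permutes_inv[OF s]]] by blast
  qed
  moreover have "card ?V = card ?E"
    by (rule card_image[OF permutes_inj_on[OF s]])
  moreover have "?E \<subseteq> {1..n}" by (auto simp: excedances_def)
  moreover have "?V \<subseteq> {1..n}"
    using permutes_image[OF s] \<open>?E \<subseteq> {1..n}\<close> by blast
  ultimately show ?thesis unfolding ballot_def by simp
qed

lemma av321_fixed_point_in_ground_points:
  assumes av: "s \<in> av321 n" and a1: "a \<in> {1..n}" and sa: "s a = a"
  shows "a \<in> ground_points n (excedances n s) (s ` excedances n s)"
proof -
  have s: "s permutes {1..n}" using av321_permutes[OF av] .
  let ?E = "excedances n s"
  have "s j < a" if "j \<in> ?E" "j < a" for j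
    using av321_fixed_point_uncovered[OF av a1 sa] that by (force simp: excedances_def)
  then have "s ` (?E \<inter> {..<a}) = s ` ?E \<inter> {..<a}"
    by (auto simp: excedances_def)
  then have "card (?E \<inter> {..<a}) = card (s ` ?E \<inter> {..<a})"
    by (metis card_image permutes_inj_on[OF s])
  moreover have "a \<notin> s ` ?E"
    using sa permutes_inv_eq[OF s, of a a] unfolding permutes_image_excedances[OF s] by simp
  ultimately show ?thesis using a1 sa unfolding ground_points_def excedances_def by simp
qed

lemma permutes_ground_point_fixed:
  fixes s :: "nat \<Rightarrow> nat"
  assumes s: "s permutes {1..n}" and a: "a \<in> ground_points n (excedances n s) (s ` excedances n s)"
  shows "s a = a"
proof -
  let ?E = "excedances n s" and ?V = "s ` excedances n s"
  have a1: "a \<in> {1..n}" and nE: "a \<notin> ?E" and eq: "card (?E \<inter> {..<a}) = card (?V \<inter> {..<a})"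
    using a unfolding ground_points_def by auto
  have "inv s ` (?V \<inter> {..<a}) \<subseteq> ?E \<inter> {..<a}"
    using permutes_inverses(2)[OF s] unfolding excedances_def by auto
  moreover have "card (inv s ` (?V \<inter> {..<a})) = card (?E \<inter> {..<a})"
    using card_image[OF permutes_inj_on[OF permutes_inv[OF s]]] eq by simp
  ultimately have onto: "inv s ` (?V \<inter> {..<a}) = ?E \<inter> {..<a}"
    by (intro card_subset_eq) auto
  have "\<not> (\<exists>j\<in>{1..n}. j \<le> a - 1 \<and> a - 1 < s j)"
  proof
    assume "\<exists>j\<in>{1..n}. j \<le> a - 1 \<and> a - 1 < s j"
    then obtain j where j: "j \<in> {1..n}" "j < a" "a \<le> s j" using a1 by auto
    then have "j \<in> inv s ` (?V \<inter> {..<a})" using onto by (auto simp: excedances_def)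
    then show False using j(3) permutes_inverses(1)[OF s] by auto
  qed
  moreover have "a - 1 \<le> n" using a1 by auto
  ultimately have "\<not> (\<exists>k\<in>{1..n}. a - 1 < k \<and> s k \<le> a - 1)"
    using permutes_ex_cut_up_iff_down[OF s] by blast
  then have "a \<le> s a" using a1 by auto
  with nE a1 show ?thesis by (simp add: excedances_def)
qed

lemma av321_fixp_eq_card_ground_points:
  assumes av: "s \<in> av321 n"
  shows "fixp n s = card (ground_points n (excedances n s) (s ` excedances n s))"
proof -
  have "{i\<in>{1..n}. s i = i} = ground_points n (excedances n s) (s ` excedances n s)"
  proof (intro set_eqI iffI)
    fix a assume "a \<in> {i\<in>{1..n}. s i = i}"
    then show "a \<in> ground_points n (excedances n s) (s ` excedances n s)"
      using av321_fixed_point_in_ground_points[OF av] by simp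
  next
    fix a assume g: "a \<in> ground_points n (excedances n s) (s ` excedances n s)"
    then have "a \<in> {1..n}" by (simp add: ground_points_def)
    with permutes_ground_point_fixed[OF av321_permutes[OF av] g] show "a \<in> {i\<in>{1..n}. s i = i}"
      by simp
  qed
  then show ?thesis unfolding fixp_def by simp
qed

section \<open>321-avoiding permutations are determined by their excedances\<close>

lemma ex_strict_mono_bij_betw:
  fixes A :: "'a::wellorder set" and B :: "'b::wellorder set"
  assumes "finite A" and "finite B" and "card A = card B"
  obtains f where "bij_betw f A B" and "strict_mono_on A f"
proof -
  obtain g where g: "bij_betw g {..<card A} A" "strict_mono_on {..<card A} g"
    using ex_bij_betw_strict_mono_card[OF assms(1)] by blast
  obtain h where h: "bij_betw h {..<card A} B" "strict_mono_on {..<card A} h"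
    using ex_bij_betw_strict_mono_card[OF assms(2)] unfolding assms(3) by blast
  let ?g' = "the_inv_into {..<card A} g"
  have "bij_betw (h \<circ> ?g') A B"
    by (rule bij_betw_trans[OF bij_betw_the_inv_into[OF g(1)] h(1)])
  moreover have "strict_mono_on A (h \<circ> ?g')"
  proof (rule strict_mono_onI)
    fix x y assume xy: "x \<in> A" "y \<in> A" "x < y"
    have i: "?g' x \<in> {..<card A}" "?g' y \<in> {..<card A}"
      using xy bij_betw_apply[OF bij_betw_the_inv_into[OF g(1)]] by auto
    have "g (?g' x) = x" "g (?g' y) = y"
      using xy f_the_inv_into_f_bij_betw[OF g(1)] by auto
    then have "?g' x < ?g' y" using strict_mono_on_less[OF g(2) i] xy(3) by simp
    then show "(h \<circ> ?g') x < (h \<circ> ?g') y" using strict_mono_onD[OF h(2) i] by simp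
  qed
  ultimately show ?thesis using that by blast
qed

lemma strict_mono_on_eq_if_same_image:
  fixes f g :: "'a::wellorder \<Rightarrow> 'b::linorder"
  assumes f: "strict_mono_on C f" and g: "strict_mono_on C g" and im: "f ` C = g ` C"
  shows "x \<in> C \<Longrightarrow> f x = g x"
proof (induction x rule: less_induct)
  case (less x)
  have False if f': "strict_mono_on C f'" and g': "strict_mono_on C g'" and im': "f' ` C = g' ` C"
    and below: "\<forall>b\<in>C. b < x \<longrightarrow> f' b = g' b" and lt: "f' x < g' x" for f' g' :: "'a \<Rightarrow> 'b"
  proof -
    obtain b where b: "b \<in> C" "f' x = g' b" using im' less.prems by blast
    consider "b < x" | "b = x" | "x < b" by (rule linorder_cases)
    then show False
    proof cases
      case 1
      then show False using strict_mono_onD[OF f' b(1) less.prems 1] below b by simp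
    next
      case 2
      then show False using b lt by simp
    next
      case 3
      then show False using strict_mono_onD[OF g' less.prems b(1) 3] b lt by simp
    qed
  qed
  moreover have "\<forall>b\<in>C. b < x \<longrightarrow> f b = g b" using less.IH by blast
  ultimately show "f x = g x"
    using f g im by (metis linorder_neqE)
qed

lemma av321_eq_if_same_excedances:
  assumes a1: "s1 \<in> av321 n" and a2: "s2 \<in> av321 n"
    and E: "excedances n s1 = excedances n s2" and V: "s1 ` excedances n s1 = s2 ` excedances n s2"
  shows "s1 = s2"
proof
  fix x
  have p1: "s1 permutes {1..n}" and p2: "s2 permutes {1..n}"
    using av321_permutes[OF a1] av321_permutes[OF a2] .
  have "s1 ` ({1..n} - excedances n s1) = s2 ` ({1..n} - excedances n s2)"
    unfolding image_set_diff[OF permutes_inj[OF p1]] image_set_diff[OF permutes_inj[OF p2]]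
      permutes_image[OF p1] permutes_image[OF p2] V ..
  then have "s1 x = s2 x" if "x \<in> {1..n} - excedances n s1"
    using strict_mono_on_eq_if_same_image[OF av321_strict_mono_on_non_excedances[OF a1]] E that
      av321_strict_mono_on_non_excedances[OF a2] by simp
  moreover have "s1 x = s2 x" if "x \<in> excedances n s1"
    using strict_mono_on_eq_if_same_image[OF av321_strict_mono_on_excedances[OF a1]] E V that
      av321_strict_mono_on_excedances[OF a2] by simp
  moreover have "s1 x = s2 x" if "x \<notin> {1..n}"
    using that permutes_not_in[OF p1] permutes_not_in[OF p2] by simp
  ultimately show "s1 x = s2 x" by blast
qed

lemma av321_if_strict_mono_on_partition:
  assumes s: "s permutes {1..n}" and A: "strict_mono_on A s" and B: "strict_mono_on ({1..n} - A) s"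
  shows "s \<in> av321 n"
proof -
  have same_side: "s i < s j"
    if "i \<in> {1..n}" "j \<in> {1..n}" "i < j" "i \<in> A \<longleftrightarrow> j \<in> A" for i j
    using strict_mono_onD[OF A, of i j] strict_mono_onD[OF B, of i j] that by auto
  have "\<not> (i < j \<and> j < k \<and> s j < s i \<and> s k < s j)"
    if "i \<in> {1..n}" "j \<in> {1..n}" "k \<in> {1..n}" for i j k
    using same_side[of i j] same_side[of j k] same_side[of i k] that by fastforce
  then show ?thesis using s unfolding av321_def by blast
qed

lemma ballot_strict_mono_bij_gt:
  assumes v: "ballot n E V" and f: "bij_betw f E V" "strict_mono_on E f" and e: "e \<in> E"
  shows "e < f e"
proof (rule ccontr)
  assume "\<not> e < f e"
  then have fe: "f e \<le> e" by simp
  have feV: "f e \<in> V" using bij_betw_apply[OF f(1) e] .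
  have "f ` (E \<inter> {..e}) \<subseteq> V \<inter> {..f e}"
  proof (rule image_subsetI)
    fix x assume "x \<in> E \<inter> {..e}"
    then show "f x \<in> V \<inter> {..f e}"
      using bij_betw_apply[OF f(1), of x] strict_mono_on_leD[OF f(2), of x e] e by auto
  qed
  moreover have "inj_on f (E \<inter> {..e})"
    using bij_betw_imp_inj_on[OF f(1)] by (rule inj_on_subset) auto
  ultimately have "card (E \<inter> {..e}) \<le> card (V \<inter> {..f e})"
    using card_inj_on_le by blast
  also have "\<dots> \<le> card (E \<inter> {..<f e})"
    using v feV unfolding ballot_def by auto
  also have "\<dots> \<le> card (E \<inter> {..<e})"
    using fe by (intro card_mono) auto
  also have "\<dots> < card (insert e (E \<inter> {..<e}))"
    by simp
  also have "insert e (E \<inter> {..<e}) = E \<inter> {..e}"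
    using e by auto
  finally show False by simp
qed

lemma card_diff_Int_atMost:
  fixes V :: "nat set"
  assumes "V \<subseteq> {1..n}" and "i \<le> n"
  shows "card (({1..n} - V) \<inter> {..i}) = i - card (V \<inter> {..i})"
proof -
  have "({1..n} - V) \<inter> {..i} = {1..i} - (V \<inter> {..i})" using assms by auto
  moreover have "V \<inter> {..i} \<subseteq> {1..i}" using assms by auto
  ultimately show ?thesis by (simp add: card_Diff_subset finite_subset)
qed

lemma ballot_strict_mono_bij_compl_le:
  assumes v: "ballot n E V"
    and g: "bij_betw g ({1..n} - E) ({1..n} - V)" "strict_mono_on ({1..n} - E) g"
    and i: "i \<in> {1..n} - E"
  shows "g i \<le> i"
proof (rule ccontr)
  assume "\<not> g i \<le> i"
  then have gi: "i < g i" by simp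
  have "({1..n} - V) \<inter> {..i} \<subseteq> g ` (({1..n} - E) \<inter> {..<i})"
  proof
    fix w assume w: "w \<in> ({1..n} - V) \<inter> {..i}"
    then have "w \<in> g ` ({1..n} - E)" using g(1) unfolding bij_betw_def by auto
    then obtain i' where i': "i' \<in> {1..n} - E" "w = g i'" by blast
    then have "g i' < g i" using w gi by auto
    then have "i' < i" using strict_mono_on_less[OF g(2) i'(1) i] by simp
    then show "w \<in> g ` (({1..n} - E) \<inter> {..<i})" using i' by auto
  qed
  then have "card (({1..n} - V) \<inter> {..i}) \<le> card (g ` (({1..n} - E) \<inter> {..<i}))"
    by (rule card_mono[rotated]) simp
  also have "\<dots> \<le> card (({1..n} - E) \<inter> {..<i})"
    by (rule card_image_le) simp
  also have "\<dots> < card (insert i (({1..n} - E) \<inter> {..<i}))"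
    by simp
  also have "insert i (({1..n} - E) \<inter> {..<i}) = ({1..n} - E) \<inter> {..i}"
    using i by auto
  finally have lt: "card (({1..n} - V) \<inter> {..i}) < card (({1..n} - E) \<inter> {..i})" .
  have "E \<subseteq> {1..n}" "V \<subseteq> {1..n}" "i \<le> n" using v i unfolding ballot_def by auto
  from lt have "i - card (V \<inter> {..i}) < i - card (E \<inter> {..i})"
    unfolding card_diff_Int_atMost[OF \<open>E \<subseteq> {1..n}\<close> \<open>i \<le> n\<close>]
      card_diff_Int_atMost[OF \<open>V \<subseteq> {1..n}\<close> \<open>i \<le> n\<close>] .
  moreover have "card (V \<inter> {..i}) \<le> card (E \<inter> {..<i})"
    using v i unfolding ballot_def by auto
  moreover have "card (E \<inter> {..<i}) \<le> card (E \<inter> {..i})" by (intro card_mono) auto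
  ultimately show False by linarith
qed

lemma ballot_imp_ex_av321:
  assumes v: "ballot n E V"
  obtains s where "s \<in> av321 n" and "excedances n s = E" and "s ` E = V"
proof -
  have EV: "E \<subseteq> {1..n}" "V \<subseteq> {1..n}" "card E = card V"
    using v unfolding ballot_def by auto
  then obtain f where f: "bij_betw f E V" "strict_mono_on E f"
    using ex_strict_mono_bij_betw[of E V] finite_subset by blast
  have "card ({1..n} - E) = card ({1..n} - V)"
    using EV by (simp add: card_Diff_subset finite_subset)
  then obtain g where g: "bij_betw g ({1..n} - E) ({1..n} - V)" "strict_mono_on ({1..n} - E) g"
    using ex_strict_mono_bij_betw by blast
  define s where "s i = (if i \<in> E then f i else if i \<in> {1..n} then g i else i)" for i
  have sE: "bij_betw s E V" "strict_mono_on E s"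
    using bij_betw_cong[of E s f V] strict_mono_onD[OF f(2)] f(1)
    by (auto simp: s_def intro!: strict_mono_onI)
  have sC: "bij_betw s ({1..n} - E) ({1..n} - V)" "strict_mono_on ({1..n} - E) s"
    using bij_betw_cong[of "{1..n} - E" s g "{1..n} - V"] strict_mono_onD[OF g(2)] g(1)
    by (auto simp: s_def intro!: strict_mono_onI)
  have "bij_betw s (E \<union> ({1..n} - E)) (V \<union> ({1..n} - V))"
    by (rule bij_betw_combine[OF sE(1) sC(1)]) auto
  then have "bij_betw s {1..n} {1..n}"
    using EV by (simp add: Un_absorb1)
  then have perm: "s permutes {1..n}"
    by (rule bij_imp_permutes) (use EV in \<open>auto simp: s_def\<close>)
  have "excedances n s = E"
    using ballot_strict_mono_bij_gt[OF v f] ballot_strict_mono_bij_compl_le[OF v g] EV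
    by (force simp: excedances_def s_def)
  moreover have "s ` E = V" using sE(1) by (simp add: bij_betw_def)
  ultimately show ?thesis
    using that av321_if_strict_mono_on_partition[OF perm sE(2) sC(2)] by blast
qed

lemma bij_betw_av321_ballot:
  "bij_betw (\<lambda>s. (excedances n s, s ` excedances n s)) (av321 n) {(E, V). ballot n E V}"
proof (rule bij_betw_imageI)
  show "inj_on (\<lambda>s. (excedances n s, s ` excedances n s)) (av321 n)"
    by (rule inj_onI, rule av321_eq_if_same_excedances) auto
  show "(\<lambda>s. (excedances n s, s ` excedances n s)) ` av321 n = {(E, V). ballot n E V}"
  proof
    show "(\<lambda>s. (excedances n s, s ` excedances n s)) ` av321 n \<subseteq> {(E, V). ballot n E V}"
      using ballot_excedances[OF av321_permutes] by auto
    show "{(E, V). ballot n E V} \<subseteq> (\<lambda>s. (excedances n s, s ` excedances n s)) ` av321 n"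
    proof clarify
      fix E V assume "ballot n E V"
      then obtain s where "s \<in> av321 n" "excedances n s = E" "s ` E = V"
        by (rule ballot_imp_ex_av321)
      then show "(E, V) \<in> (\<lambda>s. (excedances n s, s ` excedances n s)) ` av321 n" by force
    qed
  qed
qed

section \<open>Splitting off the common part of E and V\<close>

definition reduced_ballots :: "nat \<Rightarrow> (nat set \<times> nat set) set" where
  "reduced_ballots n = {(U, D). ballot n U D \<and> U \<inter> D = {}}"

lemma card_Un_disjoint_Int:
  assumes "X \<inter> Y = {}" and "finite M"
  shows "card ((X \<union> Y) \<inter> M) = card (X \<inter> M) + card (Y \<inter> M)"
proof -
  have "(X \<union> Y) \<inter> M = (X \<inter> M) \<union> (Y \<inter> M)" by auto
  then show ?thesis using assms by (simp add: card_Un_disjoint disjoint_iff)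
qed

lemma raised_points_disjoint:
  "S \<subseteq> raised_points n U D \<Longrightarrow> S \<inter> U = {} \<and> S \<inter> D = {} \<and> S \<subseteq> {1..n}"
  unfolding raised_points_def by auto

lemma ballot_union_raised_points:
  assumes v: "ballot n U D" and UD: "U \<inter> D = {}" and S: "S \<subseteq> raised_points n U D"
  shows "ballot n (U \<union> S) (D \<union> S)"
proof -
  have v1: "U \<subseteq> {1..n}" "D \<subseteq> {1..n}" "card U = card D"
    and v2: "\<And>a. a \<in> {1..n} \<Longrightarrow> card (D \<inter> {..a}) \<le> card (U \<inter> {..<a})"
    using v unfolding ballot_def by auto
  have d: "S \<inter> U = {}" "S \<inter> D = {}" "S \<subseteq> {1..n}" using raised_points_disjoint[OF S] by auto
  have fin: "finite U" "finite D" "finite S"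
    using v1(1,2) d(3) finite_subset by blast+
  have "card (U \<union> S) = card (D \<union> S)"
    using fin d v1 by (simp add: card_Un_disjoint Int_commute)
  moreover have "card ((D \<union> S) \<inter> {..a}) \<le> card ((U \<union> S) \<inter> {..<a})" if a: "a \<in> {1..n}" for a
  proof -
    have D: "card ((D \<union> S) \<inter> {..a}) = card (D \<inter> {..a}) + card (S \<inter> {..a})"
      by (rule card_Un_disjoint_Int) (use d in auto)
    have U: "card ((U \<union> S) \<inter> {..<a}) = card (U \<inter> {..<a}) + card (S \<inter> {..<a})"
      by (rule card_Un_disjoint_Int) (use d in auto)
    show ?thesis
    proof (cases "a \<in> S")
      case True
      have "S \<inter> {..a} = insert a (S \<inter> {..<a})" using True by auto
      moreover have "D \<inter> {..a} = D \<inter> {..<a}" using True d by (auto simp: order.order_iff_strict)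
      moreover have "card (D \<inter> {..<a}) < card (U \<inter> {..<a})"
        using True S unfolding raised_points_def by auto
      ultimately show ?thesis unfolding D U by simp
    next
      case False
      then have "S \<inter> {..a} = S \<inter> {..<a}" by (auto simp: order.order_iff_strict)
      then show ?thesis unfolding D U using v2[OF a] by simp
    qed
  qed
  ultimately show ?thesis unfolding ballot_def using v1 d by auto
qed

lemma ballot_split:
  assumes v: "ballot n E V"
  shows "ballot n (E - V) (V - E)" and "E \<inter> V \<subseteq> raised_points n (E - V) (V - E)"
proof -
  have v1: "E \<subseteq> {1..n}" "V \<subseteq> {1..n}" "card E = card V"
    and v2: "\<And>a. a \<in> {1..n} \<Longrightarrow> card (V \<inter> {..a}) \<le> card (E \<inter> {..<a})"
    using v unfolding ballot_def by auto
  have fin: "finite E" "finite V" using v1(1,2) finite_subset by blast+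
  have E: "card (E \<inter> M) = card ((E - V) \<inter> M) + card ((E \<inter> V) \<inter> M)" if "finite M" for M
  proof -
    have "card (E \<inter> M) = card ((E - V \<union> E \<inter> V) \<inter> M)"
      by (rule arg_cong[where f = "\<lambda>X. card (X \<inter> M)"]) blast
    also have "\<dots> = card ((E - V) \<inter> M) + card ((E \<inter> V) \<inter> M)"
      by (rule card_Un_disjoint_Int) (use that in auto)
    finally show ?thesis .
  qed
  have V: "card (V \<inter> M) = card ((V - E) \<inter> M) + card ((E \<inter> V) \<inter> M)" if "finite M" for M
  proof -
    have "card (V \<inter> M) = card ((V - E \<union> E \<inter> V) \<inter> M)"
      by (rule arg_cong[where f = "\<lambda>X. card (X \<inter> M)"]) blast
    also have "\<dots> = card ((V - E) \<inter> M) + card ((E \<inter> V) \<inter> M)"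
      by (rule card_Un_disjoint_Int) (use that in auto)
    finally show ?thesis .
  qed
  have "card (E - V) = card (V - E)"
    using v1(3) fin by (simp add: card_Diff_subset_Int Int_commute)
  moreover have "card ((V - E) \<inter> {..a}) \<le> card ((E - V) \<inter> {..<a})" if a: "a \<in> {1..n}" for a
  proof -
    have "card ((E \<inter> V) \<inter> {..<a}) \<le> card ((E \<inter> V) \<inter> {..a})" by (rule card_mono) auto
    then show ?thesis using v2[OF a] E[of "{..<a}"] V[of "{..a}"] by simp
  qed
  ultimately show "ballot n (E - V) (V - E)" unfolding ballot_def using v1 by auto
  show "E \<inter> V \<subseteq> raised_points n (E - V) (V - E)"
  proof
    fix a assume a: "a \<in> E \<inter> V"
    then have a1: "a \<in> {1..n}" using v1 by auto
    have "V \<inter> {..a} = insert a (V \<inter> {..<a})" using a by auto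
    then have "card (V \<inter> {..<a}) < card (E \<inter> {..<a})" using v2[OF a1] by simp
    then have "card ((V - E) \<inter> {..<a}) < card ((E - V) \<inter> {..<a})"
      using E[of "{..<a}"] V[of "{..<a}"] by simp
    then show "a \<in> raised_points n (E - V) (V - E)" unfolding raised_points_def using a a1 by auto
  qed
qed

lemma ground_points_union_raised_points:
  assumes S: "S \<subseteq> raised_points n U D"
  shows "ground_points n (U \<union> S) (D \<union> S) = ground_points n U D"
proof -
  have d: "S \<inter> U = {}" "S \<inter> D = {}" using raised_points_disjoint[OF S] by auto
  have "card ((U \<union> S) \<inter> {..<a}) = card (U \<inter> {..<a}) + card (S \<inter> {..<a})"
    and "card ((D \<union> S) \<inter> {..<a}) = card (D \<inter> {..<a}) + card (S \<inter> {..<a})" for a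
    by (rule card_Un_disjoint_Int; use d in auto)+
  moreover have "a \<notin> S" if "a \<in> ground_points n U D" for a
    using that S unfolding ground_points_def raised_points_def by auto
  ultimately show ?thesis unfolding ground_points_def by auto
qed

lemma bij_betw_ballot_split:
  "bij_betw (\<lambda>((U, D), S). (U \<union> S, D \<union> S))
     (Sigma (reduced_ballots n) (\<lambda>(U, D). Pow (raised_points n U D)))
     {(E, V). ballot n E V}"
  (is "bij_betw ?f ?A _")
proof (rule bij_betw_imageI)
  show "inj_on ?f ?A"
  proof (rule inj_onI, clarsimp simp: reduced_ballots_def)
    fix U D S U' D' S'
    assume "U \<inter> D = {}" "S \<subseteq> raised_points n U D" "U' \<inter> D' = {}" "S' \<subseteq> raised_points n U' D'"
      and eq: "U \<union> S = U' \<union> S'" "D \<union> S = D' \<union> S'"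
    then have d: "S \<inter> U = {}" "S \<inter> D = {}" "S' \<inter> U' = {}" "S' \<inter> D' = {}" "U \<inter> D = {}" "U' \<inter> D' = {}"
      using raised_points_disjoint by auto
    have "S = (U \<union> S) \<inter> (D \<union> S)" using d by auto
    also have "\<dots> = S'" unfolding eq using d by auto
    finally have "S = S'" .
    moreover have "U = (U \<union> S) - S" "D = (D \<union> S) - S" using d by auto
    moreover have "U' = (U' \<union> S') - S'" "D' = (D' \<union> S') - S'" using d by auto
    ultimately show "U = U' \<and> D = D' \<and> S = S'" using eq by metis
  qed
  show "?f ` ?A = {(E, V). ballot n E V}"
  proof
    show "?f ` ?A \<subseteq> {(E, V). ballot n E V}"
      using ballot_union_raised_points by (auto simp: reduced_ballots_def)
    show "{(E, V). ballot n E V} \<subseteq> ?f ` ?A"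
    proof clarify
      fix E V assume v: "ballot n E V"
      have "((E - V, V - E), E \<inter> V) \<in> ?A"
        using ballot_split[OF v] by (auto simp: reduced_ballots_def)
      moreover have "(E, V) = ?f ((E - V, V - E), E \<inter> V)" by auto
      ultimately show "(E, V) \<in> ?f ` ?A" by (rule rev_image_eqI)
    qed
  qed
qed

lemma ballot_disjoint_card_partition:
  assumes v: "ballot n U D" and UD: "U \<inter> D = {}"
  shows "card U + card D + card (raised_points n U D) + card (ground_points n U D) = n"
proof -
  let ?R = "raised_points n U D" and ?G = "ground_points n U D"
  have v1: "U \<subseteq> {1..n}" "D \<subseteq> {1..n}"
    and v2: "\<And>a. a \<in> {1..n} \<Longrightarrow> card (D \<inter> {..a}) \<le> card (U \<inter> {..<a})"
    using v unfolding ballot_def by auto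
  have le: "card (D \<inter> {..<a}) \<le> card (U \<inter> {..<a})" if "a \<in> {1..n}" for a
  proof -
    have "card (D \<inter> {..<a}) \<le> card (D \<inter> {..a})" by (rule card_mono) auto
    then show ?thesis using v2[OF that] by simp
  qed
  have cover: "{1..n} = U \<union> D \<union> ?R \<union> ?G"
  proof (intro equalityI subsetI)
    fix a assume a: "a \<in> {1..n}"
    show "a \<in> U \<union> D \<union> ?R \<union> ?G"
      using le[OF a] a unfolding raised_points_def ground_points_def
      by (cases "card (D \<inter> {..<a}) = card (U \<inter> {..<a})") auto
  next
    fix a assume "a \<in> U \<union> D \<union> ?R \<union> ?G"
    then show "a \<in> {1..n}" using v1 unfolding raised_points_def ground_points_def by blast
  qed
  have fin: "finite U" "finite D" "finite ?R" "finite ?G"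
    using v1 finite_subset unfolding raised_points_def ground_points_def by auto
  have "n = card {1..n}" by simp
  also have "\<dots> = card (U \<union> D \<union> ?R \<union> ?G)" by (simp only: cover)
  also have "\<dots> = card (U \<union> D \<union> ?R) + card ?G"
    by (rule card_Un_disjoint) (use fin in \<open>auto simp: raised_points_def ground_points_def\<close>)
  also have "card (U \<union> D \<union> ?R) = card (U \<union> D) + card ?R"
    by (rule card_Un_disjoint) (use fin in \<open>auto simp: raised_points_def\<close>)
  also have "card (U \<union> D) = card U + card D"
    by (rule card_Un_disjoint) (use fin UD in auto)
  finally show ?thesis by simp
qed

section \<open>The generating function\<close>

lemma sum_Pow_power_card:
  fixes b :: "'a::comm_semiring_1"
  assumes "finite A"
  shows "(\<Sum>X\<in>Pow A. b ^ card X) = (1 + b) ^ card A"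
  using prod_add[OF assms, of "\<lambda>_. b" "\<lambda>_. 1"] by (simp add: add.commute)

lemma sum_ballot_split:
  "(\<Sum>(E, V)\<in>{(E, V). ballot n E V}. w E V)
   = (\<Sum>(U, D)\<in>reduced_ballots n. \<Sum>S\<in>Pow (raised_points n U D). w (U \<union> S) (D \<union> S))"
proof -
  have fin: "finite (reduced_ballots n)"
    by (rule finite_subset[of _ "Pow {1..n} \<times> Pow {1..n}"]) (auto simp: reduced_ballots_def ballot_def)
  let ?B = "\<lambda>(U, D). Pow (raised_points n U D)" and ?g = "\<lambda>(U, D) S. w (U \<union> S) (D \<union> S)"
  have "(\<Sum>(E, V)\<in>{(E, V). ballot n E V}. w E V)
      = sum (case_prod ?g) (Sigma (reduced_ballots n) ?B)"
    using sum.reindex_bij_betw[OF bij_betw_ballot_split, of "\<lambda>(E, V). w E V"]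
    by (simp add: case_prod_unfold)
  also have "\<dots> = (\<Sum>UD\<in>reduced_ballots n. sum (?g UD) (?B UD))"
    by (rule sum.Sigma[OF fin, symmetric]) (auto simp: raised_points_def)
  also have "\<dots> = (\<Sum>(U, D)\<in>reduced_ballots n.
                     \<Sum>S\<in>Pow (raised_points n U D). w (U \<union> S) (D \<union> S))"
    by (simp add: case_prod_unfold)
  finally show ?thesis .
qed

definition pair_weight ::
    "nat \<Rightarrow> 'a::comm_semiring_1 \<Rightarrow> 'a \<Rightarrow> 'a \<Rightarrow> 'a \<Rightarrow> nat set \<Rightarrow> nat set \<Rightarrow> 'a" where
  "pair_weight n q a b c E V =
     q ^ (\<Sum>V - \<Sum>E) * a ^ card (V - E) * b ^ card E * c ^ card (ground_points n E V)"

definition reduced_ballot_sum :: "nat \<Rightarrow> 'a::comm_semiring_1 \<Rightarrow> 'a \<Rightarrow> 'a \<Rightarrow> 'a \<Rightarrow> 'a" where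
  "reduced_ballot_sum n q u g h =
     (\<Sum>(U, D)\<in>reduced_ballots n.
        q ^ (\<Sum>D - \<Sum>U) * u ^ card U * g ^ card (ground_points n U D) * h ^ card (raised_points n U D))"

lemma av321_weight_eq_pair_weight:
  assumes av: "s \<in> av321 n"
  shows "q ^ cros n s * a ^ cpk n s * (q * b) ^ exc n s * c ^ fixp n s
       = pair_weight n q a b c (excedances n s) (s ` excedances n s)"
proof -
  have "q ^ cros n s * a ^ cpk n s * (q * b) ^ exc n s * c ^ fixp n s
      = q ^ (cros n s + exc n s) * a ^ cpk n s * b ^ exc n s * c ^ fixp n s"
    by (simp add: power_add power_mult_distrib ac_simps)
  also have "\<dots> = pair_weight n q a b c (excedances n s) (s ` excedances n s)"
    unfolding pair_weight_def av321_cros_plus_exc[OF av, symmetric] exc_eq_card_excedances[symmetric]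
      cpk_eq_card_excedance_values_diff[OF av321_permutes[OF av], symmetric]
      av321_fixp_eq_card_ground_points[OF av, symmetric] ..
  finally show ?thesis .
qed

lemma sum_Pow_raised_points_pair_weight:
  assumes v: "ballot n U D" and UD: "U \<inter> D = {}"
  shows "(\<Sum>S\<in>Pow (raised_points n U D). pair_weight n q a b c (U \<union> S) (D \<union> S))
       = q ^ (\<Sum>D - \<Sum>U) * (a * b) ^ card U * c ^ card (ground_points n U D)
           * (1 + b) ^ card (raised_points n U D)"
proof -
  let ?K = "q ^ (\<Sum>D - \<Sum>U) * (a * b) ^ card U * c ^ card (ground_points n U D)"
  have fin: "finite U" "finite D" "card D = card U"
    using v finite_subset unfolding ballot_def by auto
  have "pair_weight n q a b c (U \<union> S) (D \<union> S) = ?K * b ^ card S"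
    if S: "S \<subseteq> raised_points n U D" for S
  proof -
    have d: "S \<inter> U = {}" "S \<inter> D = {}" "finite S"
      using raised_points_disjoint[OF S] finite_subset by auto
    then have "\<Sum>(D \<union> S) - \<Sum>(U \<union> S) = \<Sum>D - \<Sum>U"
      using fin by (simp add: sum.union_disjoint Int_commute)
    moreover have "(D \<union> S) - (U \<union> S) = D" using d UD by auto
    moreover have "card (U \<union> S) = card U + card S"
      using d fin by (simp add: card_Un_disjoint Int_commute)
    ultimately show ?thesis
      using fin(3) unfolding pair_weight_def ground_points_union_raised_points[OF S]
      by (simp add: power_add power_mult_distrib ac_simps)
  qed
  then have "(\<Sum>S\<in>Pow (raised_points n U D). pair_weight n q a b c (U \<union> S) (D \<union> S))
      = ?K * (\<Sum>S\<in>Pow (raised_points n U D). b ^ card S)"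
    unfolding sum_distrib_left by (intro sum.cong) auto
  then show ?thesis by (simp add: sum_Pow_power_card raised_points_def)
qed

lemma av321_generating_function:
  fixes q a b c :: "'a::comm_semiring_1"
  shows "(\<Sum>s\<in>av321 n. q ^ cros n s * a ^ cpk n s * (q * b) ^ exc n s * c ^ fixp n s)
       = reduced_ballot_sum n q (a * b) c (1 + b)"
proof -
  have "(\<Sum>s\<in>av321 n. q ^ cros n s * a ^ cpk n s * (q * b) ^ exc n s * c ^ fixp n s)
      = (\<Sum>s\<in>av321 n. pair_weight n q a b c (excedances n s) (s ` excedances n s))"
    by (rule sum.cong[OF refl]) (rule av321_weight_eq_pair_weight)
  also have "\<dots> = (\<Sum>(E, V)\<in>{(E, V). ballot n E V}. pair_weight n q a b c E V)"
    using sum.reindex_bij_betw[OF bij_betw_av321_ballot, of "\<lambda>(E, V). pair_weight n q a b c E V"]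
    by simp
  also have "\<dots> = (\<Sum>(U, D)\<in>reduced_ballots n.
                     \<Sum>S\<in>Pow (raised_points n U D). pair_weight n q a b c (U \<union> S) (D \<union> S))"
    by (rule sum_ballot_split)
  also have "\<dots> = reduced_ballot_sum n q (a * b) c (1 + b)"
    unfolding reduced_ballot_sum_def
    by (rule sum.cong[OF refl]) (auto simp: reduced_ballots_def sum_Pow_raised_points_pair_weight)
  finally show ?thesis .
qed

lemma reduced_ballot_sum_scale:
  fixes c :: "'a::comm_semiring_1"
  shows "c ^ n * reduced_ballot_sum n q u g h = reduced_ballot_sum n q (c^2 * u) (c * g) (c * h)"
  unfolding reduced_ballot_sum_def sum_distrib_left
proof (rule sum.cong[OF refl], clarsimp simp: reduced_ballots_def)
  fix U D assume v: "ballot n U D" and UD: "U \<inter> D = {}"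
  then have n: "n = 2 * card U + card (ground_points n U D) + card (raised_points n U D)"
    using ballot_disjoint_card_partition[OF v UD] unfolding ballot_def by simp
  show "c ^ n * (q ^ (\<Sum>D - \<Sum>U) * u ^ card U * g ^ card (ground_points n U D)
          * h ^ card (raised_points n U D))
      = q ^ (\<Sum>D - \<Sum>U) * (c^2 * u) ^ card U * (c * g) ^ card (ground_points n U D)
          * (c * h) ^ card (raised_points n U D)"
    by (subst n) (simp add: power_add power_mult_distrib ac_simps flip: power_mult)
qed

theorem corollary3p11:
  fixes n :: nat and q t r x :: real
  assumes "n \<ge> 1" and "1 + x \<noteq> 0" and "x + t \<noteq> 0" and "1 + x * t \<noteq> 0"
  shows "(\<Sum>\<sigma>\<in>av321 n. q ^ cros n \<sigma> * (t * q) ^ exc n \<sigma> * r ^ fixp n \<sigma>)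
       = ((1 + x * t) / (1 + x)) ^ n *
         (\<Sum>\<sigma>\<in>av321 n. q ^ cros n \<sigma>
             * ((1 + x)^2 * t / ((x + t) * (1 + x * t))) ^ cpk n \<sigma>
             * (q * (x + t) / (1 + x * t)) ^ exc n \<sigma>
             * ((1 + x) * r / (1 + x * t)) ^ fixp n \<sigma>)"
proof -
  define c \<alpha> \<beta> \<gamma> where "c = (1 + x * t) / (1 + x)" and "\<alpha> = (1 + x)^2 * t / ((x + t) * (1 + x * t))"
    and "\<beta> = (x + t) / (1 + x * t)" and "\<gamma> = (1 + x) * r / (1 + x * t)"
  have nonzero: "1 + x \<noteq> 0" "x + t \<noteq> 0" "t + x \<noteq> 0" "1 + x * t \<noteq> 0" "1 + t * x \<noteq> 0"
    using assms by (simp_all add: ac_simps)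
  have "1 + \<beta> = (1 + x) * (1 + t) / (1 + x * t)"
    unfolding \<beta>_def using nonzero by (simp add: field_simps)
  then have "c^2 * (\<alpha> * \<beta>) = t" and "c * \<gamma> = r" and "c * (1 + \<beta>) = 1 + t"
    unfolding c_def \<alpha>_def \<beta>_def \<gamma>_def using nonzero by (simp_all add: power2_eq_square)
  then have "(\<Sum>\<sigma>\<in>av321 n. q ^ cros n \<sigma> * (t * q) ^ exc n \<sigma> * r ^ fixp n \<sigma>)
      = c ^ n * reduced_ballot_sum n q (\<alpha> * \<beta>) \<gamma> (1 + \<beta>)"
    using av321_generating_function[where a = 1 and b = t and c = r]
    by (simp add: reduced_ballot_sum_scale mult.commute)
  also have "reduced_ballot_sum n q (\<alpha> * \<beta>) \<gamma> (1 + \<beta>)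
      = (\<Sum>\<sigma>\<in>av321 n. q ^ cros n \<sigma> * \<alpha> ^ cpk n \<sigma> * (q * \<beta>) ^ exc n \<sigma> * \<gamma> ^ fixp n \<sigma>)"
    by (rule av321_generating_function[symmetric])
  finally show ?thesis unfolding c_def \<alpha>_def \<beta>_def \<gamma>_def by simp
qed

end
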